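(* Let $p,q,p',q'\in\mathbb R^3$ satisfy $p^0+q^0=p'^0+q'^0$ and $p+q=p'+q'$. Then $$\nu_{\mathfrak c}(p)\lesssim\nu_{\mathfrak c}(p')\,\nu_{\mathfrak c}(q'),\qquad \nu_{\mathfrak c}(q)\lesssim\nu_{\mathfrak c}(p')\,\nu_{\mathfrak c}(q'),$$ where the implicit constant is independent of $\mathfrak c$ and of $(t,x)$.
   Context: $\mathfrak c\ge1$ is the speed of light, $p^0=\sqrt{\mathfrak c^2+|p|^2}$. $K_j$ are modified Bessel functions of the second kind. Let $(n,u,T)(t,x)$ be smooth with $c_0\le n\le c_0^{-1}$, $c_0\le T\le c_0^{-1}$, $|u|\le c_0^{-1}$ for a constant $c_0\in(0,1)$ independent of $\mathfrak c$; $u^0=\sqrt{\mathfrak c^2+|u|^2}$, $\gamma=\mathfrak c^2/T$, and $\mathbf M_{\mathfrak c}(t,x,p)=\frac{n\gamma}{4\pi\mathfrak c^3K_2(\gamma)}\exp\{(-u^0p^0+u\cdot p)/T\}$. For $p,q\in\mathbb R^3$ let $\mathfrak s=2(p^0q^0-p\cdot q+\mathfrak c^2)$, $g=\sqrt{2(p^0q^0-p\cdot q-\mathfrak c^2)}$ and $v_\phi(p,q)=\frac{\mathfrak c}4\frac{g\sqrt{\mathfrak s}}{p^0q^0}$. The collision frequency is $\nu_{\mathfrak c}(p)=\nu_{\mathfrak c}(t,x,p)=\int_{\mathbb R^3}\int_{\mathbb S^2}v_\phi(p,q)\mathbf M_{\mathfrak c}(t,x,q)\,d\omega\,dq$. 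*)

theory Defs
  imports "HOL-Analysis.Analysis"
begin

definition besselK :: "nat \<Rightarrow> real \<Rightarrow> real" where
  "besselK j z = (LBINT t:{0..}. exp (- z * cosh t) * cosh (real j * t))"

definition pzero :: "real \<Rightarrow> real^3 \<Rightarrow> real" where
  "pzero c p = sqrt (c\<^sup>2 + (norm p)\<^sup>2)"

definition maxwellian :: "real \<Rightarrow> real \<Rightarrow> real^3 \<Rightarrow> real \<Rightarrow> real^3 \<Rightarrow> real" where
  "maxwellian c n u T q =
     (let \<gamma> = c\<^sup>2 / T in
      n * \<gamma> / (4 * pi * c ^ 3 * besselK 2 \<gamma>)
        * exp ((- pzero c u * pzero c q + u \<bullet> q) / T))"

definition s_var :: "real \<Rightarrow> real^3 \<Rightarrow> real^3 \<Rightarrow> real" where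
  "s_var c p q = 2 * (pzero c p * pzero c q - p \<bullet> q + c\<^sup>2)"

definition g_var :: "real \<Rightarrow> real^3 \<Rightarrow> real^3 \<Rightarrow> real" where
  "g_var c p q = sqrt (2 * (pzero c p * pzero c q - p \<bullet> q - c\<^sup>2))"

definition v_phi :: "real \<Rightarrow> real^3 \<Rightarrow> real^3 \<Rightarrow> real" where
  "v_phi c p q = c / 4 * (g_var c p q * sqrt (s_var c p q)) / (pzero c p * pzero c q)"

text \<open>Collision frequency nu_c(p) = int_{R^3} int_{S^2} v_phi(p,q) M_c(q) d\<omega> dq.
  The integrand does not depend on \<omega>, so the inner integral over the unit
  sphere S^2 (surface measure, total mass 4 pi) equals 4 pi times the integrand.\<close>
definition nu :: "real \<Rightarrow> real \<Rightarrow> real^3 \<Rightarrow> real \<Rightarrow> real^3 \<Rightarrow> real" where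
  "nu c n u T p = (\<integral>q. 4 * pi * v_phi c p q * maxwellian c n u T q \<partial>lborel)"

end

theory Submission
  imports Defs "HOL-Real_Asymp.Real_Asymp"
begin

(* The collision frequency is comparable to the weight min(c, 1 + |p|), with constants depending
   only on c0. Split the Maxwellian into a prefactor and the profile exp(-(u^0 q^0 - u.q - c^2)/T).
   For gamma = c^2/T >= c0 the quantity sqrt(gamma) exp(gamma) K_2(gamma) is bounded above and below,
   so the prefactor is as well, and the profile decays like exp(-c0^2 |q| / 16). The Moller velocity is
   at most min(c, (|p| + |q|)/2), which gives the upper bound. It is at least min(c, 1 + |p|)/9216
   when |q| <= 5 and ||p| - |q|| >= (1 + |p|)/4, and such q fill a unit ball, which gives the lower
   bound. Energy conservation forces |p| <= 2 max(|p'|, |q'|), hence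
   min(c, 1 + |p|) <= 2 min(c, 1 + |p'|) min(c, 1 + |q'|), and the theorem follows. *)

section \<open>Exponential integrals\<close>

lemma nn_integral_exp_neg_atLeast_0:
  fixes k :: real
  assumes "0 < k"
  shows "(\<integral>\<^sup>+t. ennreal (exp (-k * t)) * indicator {0..} t \<partial>lborel) = ennreal (1 / k)"
proof -
  have "(\<integral>\<^sup>+t. ennreal (exp (-k * t)) * indicator {0..} t \<partial>lborel) = 0 - (- exp (-k * 0) / k)"
  proof (rule nn_integral_FTC_atLeast)
    fix x :: real
    show "DERIV (\<lambda>t. - exp (-k * t) / k) x :> exp (-k * x)"
      using assms by (auto intro!: derivative_eq_intros simp: field_simps)
    show "((\<lambda>t. - exp (-k * t) / k) \<longlongrightarrow> 0) at_top"
      using assms by real_asymp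
  qed auto
  then show ?thesis by simp
qed

lemma nn_integral_exp_neg_abs_finite:
  fixes k :: real
  assumes "0 < k"
  shows "(\<integral>\<^sup>+t. ennreal (exp (-k * \<bar>t\<bar>)) \<partial>lborel) < \<infinity>"
proof -
  let ?g = "\<lambda>t::real. ennreal (exp (-k * t)) * indicator {0..} t"
  have "(\<integral>\<^sup>+t. ennreal (exp (-k * \<bar>t\<bar>)) \<partial>lborel) \<le> (\<integral>\<^sup>+t. ?g t + ?g (-t) \<partial>lborel)"
    by (intro nn_integral_mono) (auto simp: indicator_def)
  also have "\<dots> = (\<integral>\<^sup>+t. ?g t \<partial>lborel) + (\<integral>\<^sup>+t. ?g t \<partial>distr lborel borel uminus)"
    by (subst nn_integral_distr) (auto intro!: nn_integral_add)
  also have "\<dots> = ennreal (1 / k) + ennreal (1 / k)"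
    using nn_integral_exp_neg_atLeast_0[OF assms] by (simp add: lborel_distr_uminus)
  also have "\<dots> < \<infinity>"
    by (simp flip: ennreal_plus)
  finally show ?thesis .
qed

lemma integrable_exp_neg_norm:
  fixes k :: real
  assumes "0 < k"
  shows "integrable lborel (\<lambda>x::'a::euclidean_space. exp (-k * norm x))"
proof -
  define d where "d = real DIM('a)"
  have d: "0 < d" by (simp add: d_def)
  have le: "exp (-k * norm x) \<le> (\<Prod>b\<in>Basis. exp (-(k/d) * \<bar>x \<bullet> b\<bar>))" for x :: 'a
  proof -
    have "(\<Sum>b\<in>(Basis::'a set). \<bar>x \<bullet> b\<bar>) \<le> d * norm x"
      using sum_mono[of Basis "\<lambda>b. \<bar>x \<bullet> b\<bar>" "\<lambda>_. norm x", OF Basis_le_norm] by (simp add: d_def)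
    then have "(k/d) * (\<Sum>b\<in>(Basis::'a set). \<bar>x \<bullet> b\<bar>) \<le> k * norm x"
      using assms d by (simp add: field_simps)
    then show ?thesis
      by (simp add: sum_distrib_left exp_sum[symmetric] sum_negf)
  qed
  have "(\<integral>\<^sup>+x. ennreal (\<Prod>b\<in>Basis. exp (-(k/d) * \<bar>x \<bullet> b\<bar>)) \<partial>(lborel::'a measure))
      = (\<integral>\<^sup>+x. (\<Prod>b\<in>(Basis::'a set). ennreal (exp (-(k/d) * \<bar>x \<bullet> b\<bar>))) \<partial>lborel)"
    by (simp add: prod_ennreal)
  also have "\<dots> = (\<Prod>b\<in>(Basis::'a set). (\<integral>\<^sup>+t. ennreal (exp (-(k/d) * \<bar>t\<bar>)) \<partial>lborel))"
    by (rule nn_integral_lborel_prod) auto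
  also have "\<dots> < \<infinity>"
    using nn_integral_exp_neg_abs_finite[of "k/d"] assms d by (simp add: power_less_top_ennreal)
  finally have "integrable lborel (\<lambda>x::'a. \<Prod>b\<in>Basis. exp (-(k/d) * \<bar>x \<bullet> b\<bar>))"
    by (intro integrableI_bounded) (auto simp: abs_prod)
  then show ?thesis
    by (rule Bochner_Integration.integrable_bound) (use le in \<open>auto simp: abs_prod\<close>)
qed

lemma integrable_one_plus_norm_mult_exp_neg_norm:
  fixes k :: real
  assumes "0 < k"
  shows "integrable lborel (\<lambda>x::'a::euclidean_space. (1 + norm x) * exp (-k * norm x))"
proof (rule Bochner_Integration.integrable_bound)
  show "integrable lborel (\<lambda>x::'a. (1 + 2 / k) * exp (- (k / 2) * norm x))"
    using assms by (intro integrable_mult_right integrable_exp_neg_norm) simp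
  show "AE x in lborel. norm ((1 + norm x) * exp (-k * norm x)) \<le> norm ((1 + 2 / k) * exp (- (k / 2) * norm (x::'a)))"
  proof (rule AE_I2)
    fix x :: 'a
    have "(k / 2) * norm x \<le> exp ((k / 2) * norm x)"
      using exp_ge_add_one_self[of "(k / 2) * norm x"] by linarith
    then have "norm x \<le> 2 / k * exp ((k / 2) * norm x)"
      using assms by (simp add: field_simps)
    with one_le_exp_iff[of "(k / 2) * norm x"]
    have "1 + norm x \<le> exp ((k / 2) * norm x) + 2 / k * exp ((k / 2) * norm x)"
      using assms by (intro add_mono) auto
    then have "1 + norm x \<le> (1 + 2 / k) * exp ((k / 2) * norm x)"
      by (simp add: distrib_right)
    then have "(1 + norm x) * exp (-k * norm x) \<le> (1 + 2 / k) * exp ((k / 2) * norm x) * exp (-k * norm x)"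
      by (rule mult_right_mono) simp
    also have "\<dots> = (1 + 2 / k) * exp (- (k / 2) * norm x)"
      by (simp add: mult.assoc exp_add[symmetric])
    finally show "norm ((1 + norm x) * exp (-k * norm x)) \<le> norm ((1 + 2 / k) * exp (- (k / 2) * norm x))"
      using assms by simp
  qed
qed measurable

lemma integral_one_plus_norm_mult_exp_neg_norm_pos:
  fixes k :: real
  assumes "0 < k"
  shows "0 < (\<integral>x. (1 + norm x) * exp (-k * norm x) \<partial>(lborel :: 'a::euclidean_space measure))"
proof -
  let ?f = "\<lambda>x::'a. (1 + norm x) * exp (-k * norm x)"
  have iff: "integral\<^sup>L lborel ?f = 0 \<longleftrightarrow> (AE x in lborel. ?f x = 0)"
    by (rule integral_nonneg_eq_0_iff_AE[OF integrable_one_plus_norm_mult_exp_neg_norm[OF assms]]) simp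
  have "integral\<^sup>L lborel ?f \<noteq> 0"
  proof
    assume "integral\<^sup>L lborel ?f = 0"
    have pos: "0 < ?f x" for x
      by (simp add: add_pos_nonneg)
    from \<open>integral\<^sup>L lborel ?f = 0\<close> iff have "AE x in lborel. ?f x = 0" by blast
    then have "AE x in (lborel :: 'a measure). False"
      by (rule eventually_mono) (metis pos less_irrefl)
    then show False
      using ae_filter_eq_bot_iff[of "lborel :: 'a measure"] by (simp add: eventually_False)
  qed
  moreover have "0 \<le> integral\<^sup>L lborel ?f"
    by (rule Bochner_Integration.integral_nonneg) simp
  ultimately show ?thesis by linarith
qed

section \<open>The Bessel function K_2\<close>

lemma borel_measurable_sinh [measurable]: "(sinh :: real \<Rightarrow> real) \<in> borel_measurable borel"
  by (intro borel_measurable_continuous_onI continuous_intros)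

lemma borel_measurable_cosh [measurable]: "(cosh :: real \<Rightarrow> real) \<in> borel_measurable borel"
  by (intro borel_measurable_continuous_onI continuous_intros)

lemma sinh_ge_self:
  fixes t :: real
  assumes "0 \<le> t"
  shows "t \<le> sinh t"
proof -
  have "(\<lambda>x. sinh x - x) 0 \<le> (\<lambda>x. sinh x - x) t"
  proof (rule DERIV_nonneg_imp_nondecreasing[OF assms])
    fix x :: real
    show "\<exists>y. ((\<lambda>x. sinh x - x) has_real_derivative y) (at x) \<and> 0 \<le> y"
      by (intro exI[of _ "cosh x - 1"]) (auto intro!: derivative_eq_intros simp: cosh_real_ge_1)
  qed
  then show ?thesis by simp
qed

lemma cosh_le_one_plus_sq:
  fixes t :: real
  assumes "0 \<le> t" "t \<le> 1"
  shows "cosh t \<le> 1 + t\<^sup>2"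
proof -
  have "exp (-t) * (1 + t) \<le> exp (-t) * exp t"
    by (rule mult_left_mono) (simp_all add: exp_ge_add_one_self)
  also have "\<dots> \<le> (1 - t + t\<^sup>2) * (1 + t)"
    using assms by (simp add: exp_minus algebra_simps power2_eq_square)
  finally have "exp (-t) \<le> 1 - t + t\<^sup>2"
    using assms by (simp add: mult_le_cancel_right)
  then show ?thesis
    using exp_bound[OF assms] by (simp add: cosh_def)
qed

lemma besselK_eq_integral:
  "besselK j g = (\<integral>t. indicator {0..} t * (exp (- g * cosh t) * cosh (real j * t)) \<partial>lborel)"
  by (simp add: besselK_def set_lebesgue_integral_def)

lemma has_bochner_integral_sinh_exp_cosh:
  fixes g :: real
  assumes "0 < g"
  shows "has_bochner_integral lborel
           (\<lambda>t. indicator {0..} t * (sqrt g * sinh t * exp (-g * (cosh t - 1) / 2))) (2 / sqrt g)"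
proof -
  have "(\<integral>\<^sup>+t. ennreal (sqrt g * sinh t * exp (-g * (cosh t - 1) / 2)) * indicator {0..} t \<partial>lborel)
        = 0 - (-(2 / sqrt g) * exp (-g * (cosh 0 - 1) / 2))"
  proof (rule nn_integral_FTC_atLeast)
    fix x :: real
    show "DERIV (\<lambda>t. -(2 / sqrt g) * exp (-g * (cosh t - 1) / 2)) x
            :> sqrt g * sinh x * exp (-g * (cosh x - 1) / 2)"
      using assms by (auto intro!: derivative_eq_intros simp: field_simps real_sqrt_mult[symmetric])
    assume "0 \<le> x"
    then show "0 \<le> sqrt g * sinh x * exp (-g * (cosh x - 1) / 2)"
      using assms by simp
  next
    show "((\<lambda>t. -(2 / sqrt g) * exp (-g * (cosh t - 1) / 2)) \<longlongrightarrow> 0) at_top"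
      using assms by real_asymp
  qed measurable
  then have "(\<integral>\<^sup>+t. ennreal (indicator {0..} t * (sqrt g * sinh t * exp (-g * (cosh t - 1) / 2))) \<partial>lborel)
      = ennreal (2 / sqrt g)"
    by (simp add: mult.commute indicator_mult_ennreal)
  moreover have "(\<lambda>t. indicator {0..} t * (sqrt g * sinh t * exp (-g * (cosh t - 1) / 2)))
      \<in> borel_measurable lborel"
    by measurable
  ultimately show ?thesis
    by (intro has_bochner_integral_nn_integral) (use assms in \<open>auto simp: indicator_def\<close>)
qed

(* On [0, 1/sqrt g] the factor exp(-g (cosh t - 1)/2) is at most 1; beyond, sinh t >= t makes
   sqrt g * sinh t >= 1, and the second summand has an explicit primitive. Hence K_2(g) = O(exp(-g)/sqrt g). *)
definition besselK2_majorant :: "real \<Rightarrow> real \<Rightarrow> real" where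
  "besselK2_majorant g t = indicator {0..1 / sqrt g} t + sqrt g * sinh t * exp (-g * (cosh t - 1) / 2)"

lemma cosh_sq_le_exp:
  fixes a g t :: real
  assumes a: "0 < a" "a \<le> g"
  shows "(cosh t)\<^sup>2 \<le> (1 + 4/a)\<^sup>2 * exp (g * (cosh t - 1) / 2)"
proof -
  define x where "x = g * (cosh t - 1) / 4"
  have g: "0 < g" using a by linarith
  have x: "0 \<le> x" using g cosh_real_ge_1[of t] by (simp add: x_def)
  have "cosh t = 1 + 4 * x / g" using g by (simp add: x_def field_simps)
  also have "\<dots> \<le> 1 + 4 * x / a" using x a by (intro add_left_mono divide_left_mono) auto
  also have "\<dots> \<le> (1 + 4/a) * (1 + x)" using x a by (simp add: field_simps)
  also have "\<dots> \<le> (1 + 4/a) * exp x"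
    using a by (intro mult_left_mono) (auto simp: exp_ge_add_one_self add_nonneg_nonneg)
  finally have "(cosh t)\<^sup>2 \<le> ((1 + 4/a) * exp x)\<^sup>2" by (intro power_mono) auto
  also have "\<dots> = (1 + 4/a)\<^sup>2 * exp (g * (cosh t - 1) / 2)"
    by (simp add: power_mult_distrib x_def power2_eq_square exp_add[symmetric])
  finally show ?thesis .
qed

lemma exp_le_besselK2_majorant:
  fixes g t :: real
  assumes g: "0 < g" and t: "0 \<le> t"
  shows "exp (-g * (cosh t - 1) / 2) \<le> besselK2_majorant g t"
proof (cases "t \<le> 1 / sqrt g")
  case True
  have "exp (-g * (cosh t - 1) / 2) \<le> 1" using g cosh_real_ge_1[of t] by simp
  moreover have "0 \<le> sqrt g * sinh t * exp (-g * (cosh t - 1) / 2)" using t g by simp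
  moreover have "indicator {0..1 / sqrt g} t = (1::real)" using True t by simp
  ultimately show ?thesis unfolding besselK2_majorant_def by linarith
next
  case False
  then have "1 \<le> sqrt g * t" using g by (simp add: field_simps)
  also have "\<dots> \<le> sqrt g * sinh t" using sinh_ge_self[OF t] g by (intro mult_left_mono) auto
  finally have "1 * exp (-g * (cosh t - 1) / 2) \<le> sqrt g * sinh t * exp (-g * (cosh t - 1) / 2)"
    by (rule mult_right_mono) simp
  then show ?thesis using False by (simp add: besselK2_majorant_def indicator_def)
qed

lemma besselK2_integrand_le:
  fixes a g t :: real
  assumes a: "0 < a" "a \<le> g" and t: "0 \<le> t"
  shows "exp (- g * cosh t) * cosh (real 2 * t) \<le> 2 * (1 + 4/a)\<^sup>2 * exp (-g) * besselK2_majorant g t"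
proof -
  have "cosh (real 2 * t) \<le> 2 * (cosh t)\<^sup>2"
    using cosh_double[of t] cosh_square_eq[of t] by simp
  then have "exp (- g * cosh t) * cosh (real 2 * t)
      \<le> exp (-g * cosh t) * (2 * ((1 + 4/a)\<^sup>2 * exp (g * (cosh t - 1) / 2)))"
    using cosh_sq_le_exp[OF a, of t] by (intro mult_left_mono) auto
  also have "\<dots> = 2 * (1 + 4/a)\<^sup>2 * exp (-g) * exp (-g * (cosh t - 1) / 2)"
    by (simp add: mult_exp_exp field_simps)
  also have "\<dots> \<le> 2 * (1 + 4/a)\<^sup>2 * exp (-g) * besselK2_majorant g t"
    using exp_le_besselK2_majorant[of g t] a t by (intro mult_left_mono) auto
  finally show ?thesis .
qed

lemma has_bochner_integral_besselK2_majorant: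
  fixes g :: real
  assumes "0 < g"
  shows "has_bochner_integral lborel
           (\<lambda>t. indicator {0..} t * besselK2_majorant g t)
           (3 / sqrt g)"
proof -
  have "integrable lborel (indicator {0..1 / sqrt g} :: real \<Rightarrow> real)"
    by (rule integrable_real_indicator) (auto simp: emeasure_lborel_Icc_eq)
  then have "has_bochner_integral lborel (indicator {0..1 / sqrt g}) (1 / sqrt g)"
    using assms by (simp add: has_bochner_integral_iff measure_def emeasure_lborel_Icc_eq)
  then have "has_bochner_integral lborel
      (\<lambda>t. indicator {0..1 / sqrt g} t + indicator {0..} t * (sqrt g * sinh t * exp (-g * (cosh t - 1) / 2)))
      (1 / sqrt g + 2 / sqrt g)"
    using has_bochner_integral_sinh_exp_cosh[OF assms] by (rule has_bochner_integral_add)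
  moreover have "(\<lambda>t. indicator {0..} t * besselK2_majorant g t)
      = (\<lambda>t. indicator {0..1 / sqrt g} t + indicator {0..} t * (sqrt g * sinh t * exp (-g * (cosh t - 1) / 2)))"
    by (auto simp: fun_eq_iff indicator_def besselK2_majorant_def)
  moreover have "1 / sqrt g + 2 / sqrt g = 3 / sqrt g"
    by (simp add: add_divide_distrib[symmetric])
  ultimately show ?thesis
    by simp
qed

lemma besselK2_integrable:
  fixes g :: real
  assumes "0 < g"
  shows "integrable lborel (\<lambda>t. indicator {0..} t * (exp (- g * cosh t) * cosh (real 2 * t)))"
proof (rule Bochner_Integration.integrable_bound)
  show "integrable lborel (\<lambda>t. 2 * (1 + 4/g)\<^sup>2 * exp (-g) * (indicator {0..} t * besselK2_majorant g t))"
    using has_bochner_integral_besselK2_majorant[OF assms] by (auto simp: has_bochner_integral_iff)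
  have "\<bar>indicator {0..} t * (exp (- g * cosh t) * cosh (real 2 * t))\<bar>
          \<le> \<bar>2 * (1 + 4/g)\<^sup>2 * exp (-g) * (indicator {0..} t * besselK2_majorant g t)\<bar>" for t
    using besselK2_integrand_le[OF assms order_refl, of t] by (cases "0 \<le> t") auto
  then show "AE t in lborel. norm (indicator {0..} t * (exp (- g * cosh t) * cosh (real 2 * t)))
          \<le> norm (2 * (1 + 4/g)\<^sup>2 * exp (-g) * (indicator {0..} t * besselK2_majorant g t))"
    by simp
qed measurable

lemma besselK2_scaled_le:
  fixes a g :: real
  assumes a: "0 < a" "a \<le> g"
  shows "sqrt g * exp g * besselK 2 g \<le> 6 * (1 + 4/a)\<^sup>2"
proof -
  have g: "0 < g" using a by linarith
  define C where "C = 2 * (1 + 4/a)\<^sup>2 * exp (-g)"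
  note majorant = has_bochner_integral_besselK2_majorant[OF g]
  have "besselK 2 g \<le> (\<integral>t. C * (indicator {0..} t * besselK2_majorant g t) \<partial>lborel)"
    unfolding besselK_eq_integral
  proof (rule integral_mono[OF besselK2_integrable[OF g]])
    show "integrable lborel (\<lambda>t. C * (indicator {0..} t * besselK2_majorant g t))"
      using majorant by (simp add: has_bochner_integral_iff)
    show "indicator {0..} t * (exp (- g * cosh t) * cosh (real 2 * t))
            \<le> C * (indicator {0..} t * besselK2_majorant g t)" for t
      using besselK2_integrand_le[OF a, of t] by (cases "0 \<le> t") (simp_all add: C_def)
  qed
  also have "\<dots> = C * (3 / sqrt g)"
    using majorant by (simp add: has_bochner_integral_iff)
  finally have "sqrt g * exp g * besselK 2 g \<le> sqrt g * exp g * (C * (3 / sqrt g))"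
    using g by (intro mult_left_mono) auto
  also have "\<dots> = 6 * (1 + 4/a)\<^sup>2"
    using g by (simp add: C_def exp_minus field_simps)
  finally show ?thesis .
qed

lemma besselK2_scaled_ge:
  fixes g :: real
  assumes g: "0 < g"
  shows "min 1 (sqrt g) / exp 1 \<le> sqrt g * exp g * besselK 2 g"
proof -
  define t0 where "t0 = min 1 (1 / sqrt g)"
  have t0: "0 < t0" using g by (simp add: t0_def)
  have "(\<integral>t. indicator {0..t0} t * exp (-g - 1) \<partial>lborel) \<le> besselK 2 g"
    unfolding besselK_eq_integral
  proof (rule integral_mono[OF _ besselK2_integrable[OF g]])
    show "integrable lborel (\<lambda>t. indicator {0..t0} t * exp (-g - 1) :: real)"
      by (intro integrable_mult_left integrable_real_indicator) (auto simp: emeasure_lborel_Icc_eq)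
    fix t :: real
    show "indicator {0..t0} t * exp (-g - 1) \<le> indicator {0..} t * (exp (- g * cosh t) * cosh (real 2 * t))"
    proof (cases "t \<in> {0..t0}")
      case True
      then have t: "0 \<le> t" "t \<le> 1" "t \<le> 1 / sqrt g" by (auto simp: t0_def)
      have "g * t\<^sup>2 \<le> g * (1 / sqrt g)\<^sup>2"
        using t g by (intro mult_left_mono power_mono) auto
      then have "g * t\<^sup>2 \<le> 1" using g by (simp add: power_divide)
      moreover have "g * cosh t \<le> g * (1 + t\<^sup>2)"
        using cosh_le_one_plus_sq[OF t(1,2)] g by (intro mult_left_mono) auto
      ultimately have "exp (-g - 1) \<le> exp (- g * cosh t)"
        by (simp add: distrib_left)
      also have "\<dots> \<le> exp (- g * cosh t) * cosh (real 2 * t)"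
        using cosh_real_ge_1[of "real 2 * t"] by simp
      finally show ?thesis using True by simp
    qed (auto intro!: mult_nonneg_nonneg)
  qed
  also have "(\<integral>t. indicator {0..t0} t * exp (-g - 1) \<partial>lborel) = t0 * exp (-g - 1)"
    using t0 by (simp add: measure_def emeasure_lborel_Icc_eq)
  finally have "sqrt g * exp g * (t0 * exp (-g - 1)) \<le> sqrt g * exp g * besselK 2 g"
    using g by (intro mult_left_mono) auto
  moreover have "sqrt g * exp g * (t0 * exp (-g - 1)) = min 1 (sqrt g) / exp 1"
    using g by (auto simp: t0_def min_def exp_diff exp_minus field_simps)
  ultimately show ?thesis by simp
qed

section \<open>Kinematics and the Moller velocity\<close>

lemma pzero_pos: "0 < c \<Longrightarrow> 0 < pzero c p"
  by (simp add: pzero_def add_pos_nonneg)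

lemma pzero_ge: "0 \<le> c \<Longrightarrow> c \<le> pzero c p"
  unfolding pzero_def by (intro real_le_rsqrt) auto

lemma pzero_le: "0 \<le> c \<Longrightarrow> pzero c p \<le> c + norm p"
  unfolding pzero_def by (intro real_le_lsqrt) (auto simp: power2_eq_square algebra_simps)

lemma pzero_sq: "(pzero c p)\<^sup>2 = c\<^sup>2 + (norm p)\<^sup>2"
  by (simp add: pzero_def)

lemma pzero_mult_eq: "pzero c p * pzero c q = sqrt ((c\<^sup>2 + (norm p)\<^sup>2) * (c\<^sup>2 + (norm q)\<^sup>2))"
  by (simp add: pzero_def real_sqrt_mult)

lemma pzero_mult_ge: "c\<^sup>2 + norm p * norm q \<le> pzero c p * pzero c q"
proof -
  have "(c\<^sup>2 + norm p * norm q)\<^sup>2 = (c\<^sup>2 + (norm p)\<^sup>2) * (c\<^sup>2 + (norm q)\<^sup>2) - c\<^sup>2 * (norm p - norm q)\<^sup>2"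
    by (simp add: power2_eq_square algebra_simps)
  then show ?thesis
    unfolding pzero_mult_eq by (intro real_le_rsqrt) simp
qed

lemma pzero_mult_le: "pzero c p * pzero c q \<le> c\<^sup>2 + ((norm p)\<^sup>2 + (norm q)\<^sup>2) / 2"
  unfolding pzero_mult_eq using arith_geo_mean_sqrt[of "c\<^sup>2 + (norm p)\<^sup>2" "c\<^sup>2 + (norm q)\<^sup>2"]
  by (simp add: field_simps)

definition g_half_sq :: "real \<Rightarrow> real^3 \<Rightarrow> real^3 \<Rightarrow> real" where
  "g_half_sq c p q = pzero c p * pzero c q - p \<bullet> q - c\<^sup>2"

lemma g_half_sq_nonneg: "0 \<le> g_half_sq c p q"
  using pzero_mult_ge[of c p q] Cauchy_Schwarz_ineq2[of p q] by (simp add: g_half_sq_def)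

lemma g_half_sq_le: "g_half_sq c p q \<le> (norm p + norm q)\<^sup>2 / 2"
  using pzero_mult_le[of c p q] Cauchy_Schwarz_ineq2[of p q]
  by (simp add: g_half_sq_def power2_eq_square field_simps abs_le_iff)

lemma g_half_sq_ge:
  assumes "0 < c"
  shows "c\<^sup>2 * (norm p - norm q)\<^sup>2 / (2 * (pzero c p * pzero c q)) \<le> g_half_sq c p q"
proof -
  define R where "R = pzero c p * pzero c q"
  define m where "m = c\<^sup>2 + norm p * norm q"
  have m: "0 < m" "m \<le> R" using assms pzero_mult_ge[of c p q] by (simp_all add: m_def R_def add_pos_nonneg)
  have "R\<^sup>2 = m\<^sup>2 + c\<^sup>2 * (norm p - norm q)\<^sup>2"
    unfolding R_def m_def power_mult_distrib pzero_sq by (simp add: power2_eq_square algebra_simps)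
  then have "(R - m) * (R + m) = c\<^sup>2 * (norm p - norm q)\<^sup>2"
    by (simp add: power2_eq_square algebra_simps)
  then have "R - m = c\<^sup>2 * (norm p - norm q)\<^sup>2 / (R + m)"
    using m by (simp add: field_simps)
  also have "\<dots> \<ge> c\<^sup>2 * (norm p - norm q)\<^sup>2 / (2 * R)"
    using m by (intro divide_left_mono) auto
  finally show ?thesis
    using Cauchy_Schwarz_ineq2[of p q] by (simp add: g_half_sq_def R_def m_def abs_le_iff)
qed

lemma sub_one_le_mult_sq_div_add:
  fixes c r :: real
  assumes "1 \<le> c" "0 \<le> r"
  shows "r - 1 \<le> c * r\<^sup>2 / (c + r)"
proof -
  have "0 \<le> (c - 1) * ((r - 1/2)\<^sup>2 + 3/4) + 1" using assms by simp
  also have "\<dots> = c * r\<^sup>2 - (r - 1) * (c + r)"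
    by (simp add: algebra_simps power2_eq_square)
  finally have "(r - 1) * (c + r) \<le> c * r\<^sup>2" by simp
  then show ?thesis using assms by (simp add: pos_le_divide_eq)
qed

lemma g_half_sq_ge_linear:
  assumes c: "1 \<le> c" and u: "norm u \<le> K"
  shows "(norm q - 1 - 2 * K) / (8 * (1 + K)) \<le> g_half_sq c u q"
proof (cases "2 * norm u \<le> norm q")
  case False
  have "0 \<le> K" using u norm_ge_zero order_trans by blast
  then have "(norm q - 1 - 2 * K) / (8 * (1 + K)) \<le> 0"
    using False u by (intro divide_nonpos_pos) auto
  then show ?thesis using g_half_sq_nonneg order_trans by blast
next
  case True
  define r where "r = norm q"
  have K: "0 \<le> K" using u norm_ge_zero order_trans by blast
  have r: "0 \<le> r" by (simp add: r_def)
  have "\<bar>r / 2\<bar> \<le> \<bar>norm u - r\<bar>"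
    using True r by (simp add: r_def abs_if)
  then have "(r / 2)\<^sup>2 \<le> (norm u - r)\<^sup>2"
    by (metis abs_le_square_iff)
  then have num: "c\<^sup>2 * r\<^sup>2 / 4 \<le> c\<^sup>2 * (norm u - r)\<^sup>2"
    using mult_left_mono[of "(r / 2)\<^sup>2" "(norm u - r)\<^sup>2" "c\<^sup>2"] by (simp add: power_divide)
  have "pzero c u \<le> c * (1 + K)"
    using pzero_le[of c u] u c K mult_left_mono[of 1 c K] by (simp add: algebra_simps)
  then have den: "pzero c u * pzero c q \<le> c * (1 + K) * (c + r)"
    using c K pzero_le[of c q] by (intro mult_mono) (auto simp: r_def pzero_pos less_imp_le)
  have "(r - 1 - 2 * K) / (8 * (1 + K)) \<le> (r - 1) / (8 * (1 + K))"
    using K by (intro divide_right_mono) auto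
  also have "\<dots> \<le> c * r\<^sup>2 / (c + r) / (8 * (1 + K))"
    using sub_one_le_mult_sq_div_add[OF c r] K by (intro divide_right_mono) auto
  also have "\<dots> = c * (c * r\<^sup>2) / (c * (8 * (1 + K) * (c + r)))"
    using c by (subst mult_divide_mult_cancel_left) (auto simp: divide_divide_eq_left mult_ac)
  also have "\<dots> = c\<^sup>2 * r\<^sup>2 / 4 / (2 * (c * (1 + K) * (c + r)))"
    by (simp add: power2_eq_square algebra_simps)
  also have "\<dots> \<le> c\<^sup>2 * (norm u - r)\<^sup>2 / (2 * (pzero c u * pzero c q))"
    using num den c pzero_pos[of c u] pzero_pos[of c q] by (intro frac_le) auto
  also have "\<dots> \<le> g_half_sq c u q"
    using g_half_sq_ge[of c u q] c by (simp add: r_def)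
  finally show ?thesis by (simp add: r_def)
qed

lemma v_phi_eq:
  "v_phi c p q = c * sqrt (2 * g_half_sq c p q) * sqrt (2 * g_half_sq c p q + 4 * c\<^sup>2)
                 / (4 * (pzero c p * pzero c q))"
proof -
  have "s_var c p q = 2 * g_half_sq c p q + 4 * c\<^sup>2"
    by (simp add: s_var_def g_half_sq_def algebra_simps)
  then show ?thesis
    by (simp add: v_phi_def g_var_def g_half_sq_def)
qed

lemma v_phi_nonneg: "0 \<le> c \<Longrightarrow> 0 \<le> v_phi c p q"
  unfolding v_phi_eq using pzero_ge[of c p] pzero_ge[of c q] g_half_sq_nonneg[of c p q]
  by (intro divide_nonneg_nonneg mult_nonneg_nonneg) auto

lemma v_phi_sq:
  assumes "0 < c"
  shows "(4 * (pzero c p * pzero c q) * v_phi c p q)\<^sup>2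
           = c\<^sup>2 * (2 * g_half_sq c p q) * (2 * g_half_sq c p q + 4 * c\<^sup>2)"
  using assms pzero_pos[OF assms, of p] pzero_pos[OF assms, of q] g_half_sq_nonneg[of c p q]
  by (simp add: v_phi_eq power_mult_distrib)

lemma v_phi_le_of_sq_le:
  assumes "0 < c" "0 \<le> w"
    and "c\<^sup>2 * (2 * g_half_sq c p q) * (2 * g_half_sq c p q + 4 * c\<^sup>2) \<le> (4 * (pzero c p * pzero c q) * w)\<^sup>2"
  shows "v_phi c p q \<le> w"
proof -
  define R where "R = pzero c p * pzero c q"
  have R: "0 < R" using pzero_pos[OF assms(1)] by (simp add: R_def)
  have "(4 * R * v_phi c p q)\<^sup>2 \<le> (4 * R * w)\<^sup>2"
    unfolding R_def v_phi_sq[OF assms(1)] by (rule assms(3))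
  then have "4 * R * v_phi c p q \<le> 4 * R * w"
    by (rule power2_le_imp_le) (use assms R in simp)
  then show ?thesis using R by simp
qed

lemma v_phi_le_c:
  assumes "0 < c"
  shows "v_phi c p q \<le> c"
proof (rule v_phi_le_of_sq_le[OF assms])
  define X R where "X = g_half_sq c p q" and "R = pzero c p * pzero c q"
  have "- (p \<bullet> q) \<le> norm p * norm q"
    using Cauchy_Schwarz_ineq2[of p q] by (simp add: abs_le_iff)
  then have "2 * X + 2 * c\<^sup>2 \<le> 4 * R"
    unfolding X_def R_def g_half_sq_def using pzero_mult_ge[of c p q] zero_le_power2[of c] by (smt (verit))
  have "(2 * X) * (2 * X + 4 * c\<^sup>2) = (2 * X + 2 * c\<^sup>2)\<^sup>2 - (2 * c\<^sup>2)\<^sup>2"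
    by (simp add: power2_eq_square algebra_simps)
  also have "\<dots> \<le> (2 * X + 2 * c\<^sup>2)\<^sup>2"
    by simp
  also have "\<dots> \<le> (4 * R)\<^sup>2"
    using \<open>2 * X + 2 * c\<^sup>2 \<le> 4 * R\<close> g_half_sq_nonneg[of c p q] by (intro power_mono) (auto simp: X_def)
  finally have "(2 * X) * (2 * X + 4 * c\<^sup>2) \<le> (4 * R)\<^sup>2" .
  then have "c\<^sup>2 * ((2 * X) * (2 * X + 4 * c\<^sup>2)) \<le> c\<^sup>2 * (4 * R)\<^sup>2"
    by (rule mult_left_mono) simp
  then show "c\<^sup>2 * (2 * X) * (2 * X + 4 * c\<^sup>2) \<le> (4 * R * c)\<^sup>2"
    by (metis mult.assoc mult.commute power_mult_distrib)
qed (use assms in simp)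

lemma v_phi_le_norm:
  assumes "0 < c"
  shows "v_phi c p q \<le> (norm p + norm q) / 2"
proof (rule v_phi_le_of_sq_le[OF assms])
  define X R where "X = g_half_sq c p q" and "R = pzero c p * pzero c q"
  have "- (p \<bullet> q) \<le> norm p * norm q" "0 \<le> norm p * norm q"
    using Cauchy_Schwarz_ineq2[of p q] by (simp_all add: abs_le_iff)
  then have "c\<^sup>2 \<le> R" "0 \<le> R" "2 * X + 4 * c\<^sup>2 \<le> 4 * R"
    unfolding X_def R_def g_half_sq_def using pzero_mult_ge[of c p q] zero_le_power2[of c] by (smt (verit))+
  moreover have "2 * X \<le> (norm p + norm q)\<^sup>2" "0 \<le> X"
    using g_half_sq_le[of c p q] g_half_sq_nonneg[of c p q] by (simp_all add: X_def)
  ultimately have "c\<^sup>2 * (2 * X) * (2 * X + 4 * c\<^sup>2) \<le> R * (norm p + norm q)\<^sup>2 * (4 * R)"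
    by (intro mult_mono) auto
  then show "c\<^sup>2 * (2 * X) * (2 * X + 4 * c\<^sup>2) \<le> (4 * R * ((norm p + norm q) / 2))\<^sup>2"
    by (simp add: power2_eq_square algebra_simps)
qed simp

lemma v_phi_ge_gap:
  assumes "0 < c"
  shows "c * g_half_sq c p q / (2 * (pzero c p * pzero c q)) \<le> v_phi c p q"
proof -
  define X R where "X = g_half_sq c p q" and "R = pzero c p * pzero c q"
  have R: "0 < R" using pzero_pos[OF assms] by (simp add: R_def)
  have X: "0 \<le> X" by (simp add: X_def g_half_sq_nonneg)
  have "(2 * c * X)\<^sup>2 = c\<^sup>2 * (2 * X) * (2 * X)"
    by (simp add: power2_eq_square)
  also have "\<dots> \<le> c\<^sup>2 * (2 * X) * (2 * X + 4 * c\<^sup>2)"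
    using X by (intro mult_left_mono) auto
  also have "\<dots> = (4 * R * v_phi c p q)\<^sup>2"
    unfolding X_def R_def v_phi_sq[OF assms] ..
  finally have "2 * c * X \<le> 4 * R * v_phi c p q"
    by (rule power2_le_imp_le) (use R v_phi_nonneg[of c p q] assms in simp)
  then show ?thesis
    using R by (simp add: X_def R_def[symmetric] field_simps)
qed

lemma v_phi_sq_ge_gap:
  assumes "0 < c"
  shows "c ^ 4 * g_half_sq c p q / (2 * (pzero c p * pzero c q)\<^sup>2) \<le> (v_phi c p q)\<^sup>2"
proof -
  define X R where "X = g_half_sq c p q" and "R = pzero c p * pzero c q"
  have R: "0 < R" using pzero_pos[OF assms] by (simp add: R_def)
  have X: "0 \<le> X" by (simp add: X_def g_half_sq_nonneg)
  have "8 * c ^ 4 * X = c\<^sup>2 * (2 * X) * (4 * c\<^sup>2)"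
    by (simp add: power2_eq_square power4_eq_xxxx)
  also have "\<dots> \<le> c\<^sup>2 * (2 * X) * (2 * X + 4 * c\<^sup>2)"
    using X by (intro mult_left_mono) auto
  also have "\<dots> = 16 * R\<^sup>2 * (v_phi c p q)\<^sup>2"
    unfolding X_def R_def v_phi_sq[OF assms, symmetric] by (simp add: power_mult_distrib)
  finally show ?thesis
    using R by (simp add: X_def R_def[symmetric] field_simps)
qed

definition collision_weight :: "real \<Rightarrow> real^3 \<Rightarrow> real" where
  "collision_weight c p = min c (1 + norm p)"

lemma v_phi_le_weight:
  assumes "0 < c"
  shows "v_phi c p q \<le> collision_weight c p * (1 + norm q)"
proof (cases "c \<le> 1 + norm p")
  case True
  have "v_phi c p q \<le> c * 1" using v_phi_le_c[OF assms] by simp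
  also have "\<dots> \<le> c * (1 + norm q)" using assms by (intro mult_left_mono) auto
  finally show ?thesis using True by (simp add: collision_weight_def)
next
  case False
  have "v_phi c p q \<le> (norm p + norm q) / 2" by (rule v_phi_le_norm[OF assms])
  also have "\<dots> \<le> (1 + norm p) * (1 + norm q)" by (simp add: algebra_simps)
  finally show ?thesis using False by (simp add: collision_weight_def)
qed

lemma pzero_mult_le_of_norm_le_5:
  assumes "1 \<le> c" "norm q \<le> 5"
  shows "pzero c p * pzero c q \<le> (c + norm p) * (6 * c)"
proof -
  have "pzero c q \<le> 6 * c" using pzero_le[of c q] assms by simp
  then show ?thesis
    using assms by (intro mult_mono pzero_le) (auto simp: pzero_pos less_imp_le)
qed

lemma g_half_sq_ge_separated:
  assumes "0 < c" and sep: "(1 + norm p) / 4 \<le> \<bar>norm p - norm q\<bar>"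
  shows "c\<^sup>2 * (1 + norm p)\<^sup>2 / (32 * (pzero c p * pzero c q)) \<le> g_half_sq c p q"
proof -
  define R where "R = pzero c p * pzero c q"
  have R: "0 < R" using pzero_pos[OF assms(1)] by (simp add: R_def)
  have "(1 + norm p)\<^sup>2 \<le> (4 * \<bar>norm p - norm q\<bar>)\<^sup>2"
    using sep by (intro power_mono) auto
  then have "c\<^sup>2 * (1 + norm p)\<^sup>2 / (32 * R) \<le> c\<^sup>2 * (norm p - norm q)\<^sup>2 / (2 * R)"
    using R by (simp add: power_mult_distrib field_simps mult_left_mono)
  also have "\<dots> \<le> g_half_sq c p q"
    using g_half_sq_ge[OF assms(1), of p q] by (simp add: R_def)
  finally show ?thesis by (simp add: R_def)
qed

lemma v_phi_ge_relativistic: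
  assumes c: "1 \<le> c" "c \<le> 1 + norm p" and q: "norm q \<le> 5"
    and sep: "(1 + norm p) / 4 \<le> \<bar>norm p - norm q\<bar>"
  shows "c / 9216 \<le> v_phi c p q"
proof -
  define X R m where "X = g_half_sq c p q" and "R = pzero c p * pzero c q" and "m = 1 + norm p"
  have c0: "0 < c" using c by simp
  have R: "0 < R" using pzero_pos[OF c0] by (simp add: R_def)
  have X: "c\<^sup>2 * m\<^sup>2 / (32 * R) \<le> X"
    using g_half_sq_ge_separated[OF c0 sep] by (simp add: X_def R_def m_def)
  have "(c + norm p) * (6 * c) \<le> (2 * m) * (6 * c)"
    using c by (intro mult_right_mono) (auto simp: m_def)
  with pzero_mult_le_of_norm_le_5[OF c(1) q, of p] have "R \<le> (2 * m) * (6 * c)"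
    unfolding R_def by (rule order_trans)
  then have Rm: "R \<le> 12 * c * m" by (simp add: mult_ac)
  have "0 < m" by (simp add: m_def add_pos_nonneg)
  then have "c / 9216 = c * (c\<^sup>2 * m\<^sup>2 / (32 * (12 * c * m))) / (2 * (12 * c * m))"
    using c0 by (simp add: field_simps power2_eq_square)
  also have "\<dots> \<le> c * X / (2 * R)"
  proof (rule frac_le)
    have "c\<^sup>2 * m\<^sup>2 / (32 * (12 * c * m)) \<le> c\<^sup>2 * m\<^sup>2 / (32 * R)"
      using R Rm by (intro divide_left_mono) auto
    then show "c * (c\<^sup>2 * m\<^sup>2 / (32 * (12 * c * m))) \<le> c * X"
      using X c0 by (intro mult_left_mono) auto
  qed (use R Rm c0 g_half_sq_nonneg[of c p q] in \<open>auto simp: X_def\<close>)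
  also have "\<dots> \<le> v_phi c p q"
    using v_phi_ge_gap[OF c0, of p q] by (simp add: X_def R_def)
  finally show ?thesis .
qed

lemma v_phi_ge_nonrelativistic:
  assumes c: "1 + norm p \<le> c" and q: "norm q \<le> 5"
    and sep: "(1 + norm p) / 4 \<le> \<bar>norm p - norm q\<bar>"
  shows "(1 + norm p) / 9216 \<le> v_phi c p q"
proof -
  define X R m where "X = g_half_sq c p q" and "R = pzero c p * pzero c q" and "m = 1 + norm p"
  have c1: "1 \<le> c" and c0: "0 < c" using c norm_ge_zero[of p] by linarith+
  have R: "0 < R" using pzero_pos[OF c0] by (simp add: R_def)
  have X: "c\<^sup>2 * m\<^sup>2 / (32 * R) \<le> X"
    using g_half_sq_ge_separated[OF c0 sep] by (simp add: X_def R_def m_def)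
  have "(c + norm p) * (6 * c) \<le> (2 * c) * (6 * c)"
    using c c0 by (intro mult_right_mono) auto
  with pzero_mult_le_of_norm_le_5[OF c1 q, of p] have "R \<le> (2 * c) * (6 * c)"
    unfolding R_def by (rule order_trans)
  then have Rc: "R \<le> 12 * c\<^sup>2" by (simp add: power2_eq_square)
  have "(m / 9216)\<^sup>2 \<le> m\<^sup>2 / 110592"
    by (simp add: power_divide)
  also have "\<dots> = c ^ 4 * (c\<^sup>2 * m\<^sup>2 / (32 * (12 * c\<^sup>2))) / (2 * (12 * c\<^sup>2)\<^sup>2)"
    using c0 by (simp add: field_simps power2_eq_square power4_eq_xxxx)
  also have "\<dots> \<le> c ^ 4 * X / (2 * R\<^sup>2)"
  proof (rule frac_le)
    have "c\<^sup>2 * m\<^sup>2 / (32 * (12 * c\<^sup>2)) \<le> c\<^sup>2 * m\<^sup>2 / (32 * R)"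
      using R Rc c0 by (intro divide_left_mono) auto
    then show "c ^ 4 * (c\<^sup>2 * m\<^sup>2 / (32 * (12 * c\<^sup>2))) \<le> c ^ 4 * X"
      using X by (intro mult_left_mono) auto
    show "2 * R\<^sup>2 \<le> 2 * (12 * c\<^sup>2)\<^sup>2"
      using R Rc by (intro mult_left_mono power_mono) auto
  qed (use R c0 g_half_sq_nonneg[of c p q] in \<open>auto simp: X_def\<close>)
  also have "\<dots> \<le> (v_phi c p q)\<^sup>2"
    using v_phi_sq_ge_gap[OF c0, of p q] by (simp add: X_def R_def)
  finally show ?thesis
    unfolding m_def by (rule power2_le_imp_le) (use v_phi_nonneg[of c p q] c0 in simp)
qed

lemma v_phi_ge:
  assumes "1 \<le> c" "norm q \<le> 5" "(1 + norm p) / 4 \<le> \<bar>norm p - norm q\<bar>"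
  shows "collision_weight c p / 9216 \<le> v_phi c p q"
  using v_phi_ge_relativistic[of c p q] v_phi_ge_nonrelativistic[of p c q] assms
  by (cases "c \<le> 1 + norm p") (auto simp: collision_weight_def)

lemma norm_le_of_pzero_sum_eq:
  assumes c: "0 < c" and E: "pzero c p + pzero c q = pzero c p' + pzero c q'"
  shows "norm p \<le> 2 * max (norm p') (norm q')"
proof -
  define e where "e x = pzero c x - c" for x
  have e: "0 \<le> e x" for x using pzero_ge[of c x] c by (simp add: e_def)
  have norm_sq: "(norm x)\<^sup>2 = e x * (e x + 2 * c)" for x
    using pzero_sq[of c x] by (simp add: e_def algebra_simps power2_eq_square)
  have mono: "norm x \<le> 2 * norm y" if "e x \<le> 2 * e y" for x y
  proof -
    have "(norm x)\<^sup>2 \<le> (2 * e y) * (2 * e y + 2 * c)"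
      unfolding norm_sq using that e[of x] c by (intro mult_mono) auto
    also have "\<dots> \<le> (2 * norm y)\<^sup>2"
      using norm_sq[of y] mult_nonneg_nonneg[OF less_imp_le[OF c] e[of y]]
      by (simp add: power2_eq_square algebra_simps)
    finally show ?thesis by (rule power2_le_imp_le) simp
  qed
  have "e p \<le> e p' + e q'" using E pzero_ge[of c q] c by (simp add: e_def)
  then have "e p \<le> 2 * e p' \<or> e p \<le> 2 * e q'" by linarith
  then show ?thesis using mono[of p p'] mono[of p q'] by linarith
qed

lemma collision_weight_le_of_pzero_sum_eq:
  assumes c: "1 \<le> c" and E: "pzero c p + pzero c q = pzero c p' + pzero c q'"
  shows "collision_weight c p \<le> 2 * collision_weight c p' * collision_weight c q'"
proof -
  have w: "1 \<le> collision_weight c p'" "1 \<le> collision_weight c q'"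
    using c by (auto simp: collision_weight_def)
  have "collision_weight c p \<le> 2 * max (collision_weight c p') (collision_weight c q')"
    using norm_le_of_pzero_sum_eq[OF _ E] c by (auto simp: collision_weight_def max_def min_def)
  also have "max (collision_weight c p') (collision_weight c q') \<le> collision_weight c p' * collision_weight c q'"
    using w mult_left_mono[of 1 "collision_weight c q'" "collision_weight c p'"]
      mult_right_mono[of 1 "collision_weight c p'" "collision_weight c q'"] by simp
  finally show ?thesis by simp
qed

section \<open>The relativistic Maxwellian\<close>

definition maxwellian_prefactor :: "real \<Rightarrow> real \<Rightarrow> real \<Rightarrow> real" where
  "maxwellian_prefactor c n T = (let \<gamma> = c\<^sup>2 / T in n * \<gamma> / (4 * pi * c ^ 3 * besselK 2 \<gamma>) * exp (- \<gamma>))"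

definition maxwellian_profile :: "real \<Rightarrow> real^3 \<Rightarrow> real \<Rightarrow> real^3 \<Rightarrow> real" where
  "maxwellian_profile c u T q = exp (- g_half_sq c u q / T)"

lemma maxwellian_eq_prefactor_profile:
  "maxwellian c n u T q = maxwellian_prefactor c n T * maxwellian_profile c u T q"
proof -
  have "(- pzero c u * pzero c q + u \<bullet> q) / T = - (c\<^sup>2 / T) + - g_half_sq c u q / T"
    by (simp add: g_half_sq_def diff_divide_distrib add_divide_distrib)
  then have "exp ((- pzero c u * pzero c q + u \<bullet> q) / T) = exp (- (c\<^sup>2 / T)) * exp (- g_half_sq c u q / T)"
    by (metis exp_add)
  then show ?thesis
    by (simp add: maxwellian_def maxwellian_prefactor_def maxwellian_profile_def Let_def)
qed

(* Isolates sqrt gamma * exp gamma * K_2 gamma, which is bounded above and below for gamma >= c0. *)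
lemma maxwellian_prefactor_eq:
  assumes "0 < c" "0 < T"
  shows "maxwellian_prefactor c n T
           = n / (4 * pi * T * sqrt T * (sqrt (c\<^sup>2 / T) * exp (c\<^sup>2 / T) * besselK 2 (c\<^sup>2 / T)))"
  using assms by (simp add: maxwellian_prefactor_def Let_def real_sqrt_divide exp_minus field_simps power3_eq_cube power2_eq_square)

lemma le_sq_div_of_le_inverse:
  fixes a c T :: real
  assumes "0 < a" "1 \<le> c" "0 < T" "T \<le> 1 / a"
  shows "a \<le> c\<^sup>2 / T"
proof -
  have "a \<le> 1 / T" using assms by (simp add: field_simps)
  also have "1 / T \<le> c\<^sup>2 / T" using assms by (simp add: divide_right_mono one_le_power)
  finally show ?thesis .
qed

lemma maxwellian_prefactor_le:
  assumes c0: "0 < c0" "c0 < 1" and c: "1 \<le> c" and n: "0 \<le> n" "n \<le> 1 / c0"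
    and T: "c0 \<le> T" "T \<le> 1 / c0"
  shows "maxwellian_prefactor c n T \<le> exp 1 / (4 * pi * c0 ^ 3)"
proof -
  define \<gamma> where "\<gamma> = c\<^sup>2 / T"
  define \<kappa> where "\<kappa> = sqrt \<gamma> * exp \<gamma> * besselK 2 \<gamma>"
  have Tpos: "0 < T" using c0 T by linarith
  have \<gamma>: "c0 \<le> \<gamma>" using le_sq_div_of_le_inverse[OF c0(1) c Tpos T(2)] by (simp add: \<gamma>_def)
  have "sqrt c0 / exp 1 \<le> min 1 (sqrt \<gamma>) / exp 1"
    using \<gamma> c0 by (intro divide_right_mono) auto
  also have "\<dots> \<le> \<kappa>"
    using besselK2_scaled_ge[of \<gamma>] \<gamma> c0 by (simp add: \<kappa>_def)
  finally have \<kappa>: "sqrt c0 / exp 1 \<le> \<kappa>" .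
  have "maxwellian_prefactor c n T = n / (4 * pi * (T * sqrt T) * \<kappa>)"
    using c Tpos by (simp add: maxwellian_prefactor_eq \<kappa>_def \<gamma>_def mult.assoc)
  also have "\<dots> \<le> (1 / c0) / (4 * pi * (c0 * sqrt c0) * (sqrt c0 / exp 1))"
    using n T c0 \<kappa> by (intro frac_le mult_mono) auto
  also have "\<dots> = exp 1 / (4 * pi * c0 ^ 3)"
    using c0 by (simp add: field_simps power3_eq_cube)
  finally show ?thesis .
qed

lemma maxwellian_prefactor_ge:
  assumes c0: "0 < c0" "c0 < 1" and c: "1 \<le> c" and n: "c0 \<le> n"
    and T: "c0 \<le> T" "T \<le> 1 / c0"
  shows "c0 ^ 3 / (24 * pi * (1 + 4 / c0)\<^sup>2) \<le> maxwellian_prefactor c n T"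
proof -
  define \<gamma> where "\<gamma> = c\<^sup>2 / T"
  define \<kappa> where "\<kappa> = sqrt \<gamma> * exp \<gamma> * besselK 2 \<gamma>"
  have Tpos: "0 < T" using c0 T by linarith
  have \<gamma>: "c0 \<le> \<gamma>" using le_sq_div_of_le_inverse[OF c0(1) c Tpos T(2)] by (simp add: \<gamma>_def)
  have "0 < min 1 (sqrt \<gamma>) / exp 1" using \<gamma> c0 by simp
  then have \<kappa>: "\<kappa> \<le> 6 * (1 + 4 / c0)\<^sup>2" "0 < \<kappa>"
    using besselK2_scaled_le[OF c0(1) \<gamma>] besselK2_scaled_ge[of \<gamma>] \<gamma> c0
    unfolding \<kappa>_def by linarith+
  have "1 / c0 \<le> (1 / c0)\<^sup>2"
    using c0 by (simp add: power2_eq_square field_simps)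
  then have "sqrt T \<le> 1 / c0"
    using T c0 by (intro real_le_lsqrt) auto
  have "c0 ^ 3 / (24 * pi * (1 + 4 / c0)\<^sup>2) = c0 / (4 * pi * ((1 / c0) * (1 / c0)) * (6 * (1 + 4 / c0)\<^sup>2))"
    using c0 by (simp add: field_simps power3_eq_cube)
  also have "\<dots> \<le> n / (4 * pi * (T * sqrt T) * \<kappa>)"
    using n T c0 \<kappa> \<open>sqrt T \<le> 1 / c0\<close> Tpos by (intro frac_le mult_mono) auto
  also have "\<dots> = maxwellian_prefactor c n T"
    using c Tpos by (simp add: maxwellian_prefactor_eq \<kappa>_def \<gamma>_def mult.assoc)
  finally show ?thesis .
qed

lemma maxwellian_profile_le:
  assumes c0: "0 < c0" "c0 < 1" and c: "1 \<le> c" and T: "c0 \<le> T" "T \<le> 1 / c0"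
    and u: "norm u \<le> 1 / c0"
  shows "maxwellian_profile c u T q \<le> exp (1 / (4 * c0)) * exp (- (c0\<^sup>2 / 16) * norm q)"
proof -
  define K where "K = 1 / c0"
  define D where "D = 8 * (1 + K) * T"
  have Tpos: "0 < T" using c0 T by linarith
  have K: "1 \<le> K" using c0 by (simp add: K_def)
  have D: "0 < D" using K Tpos by (simp add: D_def)
  have "1 + K \<le> 2 / c0" using c0 by (simp add: K_def field_simps)
  then have "D \<le> 8 * (2 / c0) * (1 / c0)"
    unfolding D_def using K T Tpos c0 by (intro mult_mono) auto
  also have "\<dots> = 16 / c0\<^sup>2" by (simp add: power2_eq_square)
  finally have "norm q / (16 / c0\<^sup>2) \<le> norm q / D"
    using D c0 by (intro divide_left_mono) auto
  then have a: "c0\<^sup>2 / 16 * norm q \<le> norm q / D"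
    by (simp add: field_simps)
  have "1 \<le> T / c0" using T c0 by simp
  then have "1 + 2 * K \<le> 2 * (1 + K) * (T / c0)"
    using K mult_left_mono[of 1 "T / c0" "2 * (1 + K)"] by simp
  also have "\<dots> = 1 / (4 * c0) * D"
    using c0 by (simp add: D_def field_simps)
  finally have b: "(1 + 2 * K) / D \<le> 1 / (4 * c0)"
    using D by (simp add: pos_divide_le_eq)
  have "(norm q - 1 - 2 * K) / (8 * (1 + K)) / T \<le> g_half_sq c u q / T"
    using g_half_sq_ge_linear[OF c, of u K q] u Tpos by (intro divide_right_mono) (auto simp: K_def)
  moreover have "(norm q - 1 - 2 * K) / (8 * (1 + K)) / T = norm q / D - (1 + 2 * K) / D"
    by (simp add: D_def diff_divide_distrib[symmetric] algebra_simps)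
  ultimately have "c0\<^sup>2 / 16 * norm q - 1 / (4 * c0) \<le> g_half_sq c u q / T"
    using a b by linarith
  then have "- g_half_sq c u q / T \<le> 1 / (4 * c0) + - (c0\<^sup>2 / 16) * norm q"
    by simp
  then show ?thesis
    unfolding maxwellian_profile_def exp_add[symmetric] by (rule exp_mono)
qed

lemma maxwellian_profile_ge:
  assumes "0 < T" "norm u \<le> K"
  shows "exp (- (K + norm q)\<^sup>2 / (2 * T)) \<le> maxwellian_profile c u T q"
proof -
  have "g_half_sq c u q \<le> (K + norm q)\<^sup>2 / 2"
    using g_half_sq_le[of c u q] power_mono[of "norm u + norm q" "K + norm q" 2] assms by simp
  then have "g_half_sq c u q / T \<le> (K + norm q)\<^sup>2 / 2 / T"
    using assms by (intro divide_right_mono) auto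
  then show ?thesis
    unfolding maxwellian_profile_def by (simp add: field_simps)
qed

section \<open>The collision frequency\<close>

lemma besselK_nonneg: "0 \<le> besselK j g"
  unfolding besselK_eq_integral by (rule Bochner_Integration.integral_nonneg) simp

lemma maxwellian_prefactor_nonneg:
  assumes "0 \<le> c" "0 \<le> n" "0 < T"
  shows "0 \<le> maxwellian_prefactor c n T"
  using assms besselK_nonneg[of 2 "c\<^sup>2 / T"] by (simp add: maxwellian_prefactor_def Let_def)

lemma maxwellian_nonneg:
  assumes "0 \<le> c" "0 \<le> n" "0 < T"
  shows "0 \<le> maxwellian c n u T q"
  using maxwellian_prefactor_nonneg[OF assms]
  by (simp add: maxwellian_eq_prefactor_profile maxwellian_profile_def)

definition admissible_state :: "real \<Rightarrow> real \<Rightarrow> real \<Rightarrow> real^3 \<Rightarrow> real \<Rightarrow> bool" where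
  "admissible_state c0 c n u T \<longleftrightarrow>
     1 \<le> c \<and> c0 \<le> n \<and> n \<le> 1 / c0 \<and> c0 \<le> T \<and> T \<le> 1 / c0 \<and> norm u \<le> 1 / c0"

lemma nu_integrand_measurable:
  "(\<lambda>q. 4 * pi * v_phi c p q * maxwellian c n u T q) \<in> borel_measurable lborel"
  unfolding v_phi_def g_var_def s_var_def pzero_def maxwellian_def Let_def by measurable

lemma nu_integrand_nonneg:
  assumes "0 < c0" "admissible_state c0 c n u T"
  shows "0 \<le> 4 * pi * v_phi c p q * maxwellian c n u T q"
  using assms v_phi_nonneg[of c p q] maxwellian_nonneg[of c n T u q]
  by (simp add: admissible_state_def)

lemma nu_integrand_le:
  assumes c0: "0 < c0" "c0 < 1" and adm: "admissible_state c0 c n u T"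
  shows "4 * pi * v_phi c p q * maxwellian c n u T q
           \<le> exp 1 / c0 ^ 3 * exp (1 / (4 * c0)) * collision_weight c p
              * ((1 + norm q) * exp (- (c0\<^sup>2 / 16) * norm q))"
proof -
  have c: "1 \<le> c" "0 < c" and n: "0 \<le> n" "n \<le> 1 / c0" and T: "c0 \<le> T" "T \<le> 1 / c0"
    and u: "norm u \<le> 1 / c0"
    using adm c0 by (auto simp: admissible_state_def)
  have "v_phi c p q * maxwellian_prefactor c n T * maxwellian_profile c u T q
        \<le> (collision_weight c p * (1 + norm q)) * (exp 1 / (4 * pi * c0 ^ 3))
           * (exp (1 / (4 * c0)) * exp (- (c0\<^sup>2 / 16) * norm q))"
    using v_phi_le_weight[OF c(2), of p q] v_phi_nonneg[of c p q] c
      maxwellian_prefactor_le[OF c0 c(1) n T] maxwellian_profile_le[OF c0 c(1) T u, of q]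
      maxwellian_prefactor_nonneg[of c n T] c0 n T
    by (intro mult_mono) (auto simp: maxwellian_profile_def)
  then have "4 * pi * (v_phi c p q * maxwellian_prefactor c n T * maxwellian_profile c u T q)
        \<le> 4 * pi * ((collision_weight c p * (1 + norm q)) * (exp 1 / (4 * pi * c0 ^ 3))
           * (exp (1 / (4 * c0)) * exp (- (c0\<^sup>2 / 16) * norm q)))"
    by (rule mult_left_mono) simp
  also have "\<dots> = exp 1 / c0 ^ 3 * exp (1 / (4 * c0)) * collision_weight c p
              * ((1 + norm q) * exp (- (c0\<^sup>2 / 16) * norm q))"
    using c0 by (simp add: field_simps)
  finally show ?thesis
    by (simp add: maxwellian_eq_prefactor_profile mult_ac)
qed

lemma nu_integrand_integrable:
  assumes c0: "0 < c0" "c0 < 1" and adm: "admissible_state c0 c n u T"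
  shows "integrable lborel (\<lambda>q. 4 * pi * v_phi c p q * maxwellian c n u T q)"
proof (rule Bochner_Integration.integrable_bound)
  show "integrable lborel (\<lambda>q::real^3. exp 1 / c0 ^ 3 * exp (1 / (4 * c0)) * collision_weight c p
          * ((1 + norm q) * exp (- (c0\<^sup>2 / 16) * norm q)))"
    using c0 by (intro integrable_mult_right integrable_one_plus_norm_mult_exp_neg_norm) simp
  show "AE q in lborel. norm (4 * pi * v_phi c p q * maxwellian c n u T q)
          \<le> norm (exp 1 / c0 ^ 3 * exp (1 / (4 * c0)) * collision_weight c p
                   * ((1 + norm q) * exp (- (c0\<^sup>2 / 16) * norm q)))"
    using nu_integrand_le[OF c0 adm, of p] nu_integrand_nonneg[OF c0(1) adm, of p]
    by (intro AE_I2) (smt (verit) real_norm_def)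
qed (rule nu_integrand_measurable)

lemma nu_le_weight:
  assumes c0: "0 < c0" "c0 < 1"
  shows "\<exists>B>0. \<forall>c n u T p. admissible_state c0 c n u T \<longrightarrow> nu c n u T p \<le> B * collision_weight c p"
proof -
  define I where "I = (\<integral>q. (1 + norm q) * exp (- (c0\<^sup>2 / 16) * norm q) \<partial>(lborel :: (real^3) measure))"
  define B where "B = exp 1 / c0 ^ 3 * exp (1 / (4 * c0)) * I"
  have "0 < I"
    unfolding I_def using c0 by (intro integral_one_plus_norm_mult_exp_neg_norm_pos) simp
  then have B: "0 < B" using c0 by (simp add: B_def)
  have "nu c n u T p \<le> B * collision_weight c p" if adm: "admissible_state c0 c n u T" for c n u T p
  proof -
    have "nu c n u T p \<le> (\<integral>q. exp 1 / c0 ^ 3 * exp (1 / (4 * c0)) * collision_weight c p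
                              * ((1 + norm q) * exp (- (c0\<^sup>2 / 16) * norm q)) \<partial>(lborel :: (real^3) measure))"
      unfolding nu_def
    proof (rule integral_mono[OF nu_integrand_integrable[OF c0 adm]])
      show "integrable lborel (\<lambda>q::real^3. exp 1 / c0 ^ 3 * exp (1 / (4 * c0)) * collision_weight c p
              * ((1 + norm q) * exp (- (c0\<^sup>2 / 16) * norm q)))"
        using c0 by (intro integrable_mult_right integrable_one_plus_norm_mult_exp_neg_norm) simp
    qed (rule nu_integrand_le[OF c0 adm])
    also have "\<dots> = B * collision_weight c p"
      by (simp add: B_def I_def)
    finally show ?thesis .
  qed
  with B show ?thesis by blast
qed

lemma unit_ball_separated_from:
  fixes p :: "real^3"
  obtains z :: "real^3"
    where "\<And>q. q \<in> ball z 1 \<Longrightarrow> norm q \<le> 5 \<and> (1 + norm p) / 4 \<le> \<bar>norm p - norm q\<bar>"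
proof (cases "2 \<le> norm p")
  case True
  show ?thesis
    by (rule that[of 0]) (use True in auto)
next
  case False
  define z :: "real^3" where "z = 4 *\<^sub>R axis 1 1"
  have "norm z = 4" by (simp add: z_def)
  then have "3 \<le> norm q \<and> norm q \<le> 5" if "q \<in> ball z 1" for q
    using that norm_triangle_ineq3[of z q] norm_triangle_ineq3[of q z]
    by (auto simp: dist_norm norm_minus_commute)
  then show ?thesis
    using False by (intro that[of z]) force
qed

lemma nu_integrand_ge:
  assumes c0: "0 < c0" "c0 < 1" and adm: "admissible_state c0 c n u T"
    and q: "norm q \<le> 5" and sep: "(1 + norm p) / 4 \<le> \<bar>norm p - norm q\<bar>"
  shows "c0 ^ 3 * exp (- (1 / c0 + 5)\<^sup>2 / (2 * c0)) / (55296 * (1 + 4 / c0)\<^sup>2) * collision_weight c p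
           \<le> 4 * pi * v_phi c p q * maxwellian c n u T q"
proof -
  define A where "A = c0 ^ 3 / (24 * pi * (1 + 4 / c0)\<^sup>2)"
  define E where "E = exp (- (1 / c0 + 5)\<^sup>2 / (2 * c0))"
  have c: "1 \<le> c" and n: "c0 \<le> n" and T: "c0 \<le> T" "T \<le> 1 / c0" and u: "norm u \<le> 1 / c0"
    using adm by (auto simp: admissible_state_def)
  have "0 < 1 + 4 / c0" using c0 by (simp add: add_pos_pos)
  then have A: "0 < A" using c0 by (simp add: A_def)
  have "(1 / c0 + norm q)\<^sup>2 / (2 * T) \<le> (1 / c0 + 5)\<^sup>2 / (2 * c0)"
    using q c0 T by (intro frac_le power_mono) auto
  then have "E \<le> exp (- (1 / c0 + norm q)\<^sup>2 / (2 * T))"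
    unfolding E_def by simp
  also have "\<dots> \<le> maxwellian_profile c u T q"
    using maxwellian_profile_ge[of T u "1 / c0" q c] u T c0 by simp
  finally have "E \<le> maxwellian_profile c u T q" .
  moreover have "A \<le> maxwellian_prefactor c n T"
    using maxwellian_prefactor_ge[OF c0 c n T] by (simp add: A_def)
  ultimately have bound: "collision_weight c p / 9216 * (A * E)
      \<le> v_phi c p q * (maxwellian_prefactor c n T * maxwellian_profile c u T q)"
    using v_phi_ge[OF c q sep] v_phi_nonneg[of c p q] A c
    by (intro mult_mono) (auto simp: E_def collision_weight_def)
  have "c0 ^ 3 * E / (55296 * (1 + 4 / c0)\<^sup>2) * collision_weight c p
      = 4 * pi * (collision_weight c p / 9216 * (A * E))"
    by (simp add: A_def field_simps)
  also have "\<dots> \<le> 4 * pi * (v_phi c p q * (maxwellian_prefactor c n T * maxwellian_profile c u T q))"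
    using bound by (rule mult_left_mono) simp
  also have "\<dots> = 4 * pi * v_phi c p q * maxwellian c n u T q"
    by (simp add: maxwellian_eq_prefactor_profile)
  finally show ?thesis
    by (simp only: E_def)
qed

lemma nu_ge_weight:
  assumes c0: "0 < c0" "c0 < 1"
  shows "\<exists>a>0. \<forall>c n u T p. admissible_state c0 c n u T \<longrightarrow> a * collision_weight c p \<le> nu c n u T p"
proof -
  define K where "K = c0 ^ 3 * exp (- (1 / c0 + 5)\<^sup>2 / (2 * c0)) / (55296 * (1 + 4 / c0)\<^sup>2)"
  define V where "V = measure lborel (ball (0 :: real^3) 1)"
  have "0 < 1 + 4 / c0" using c0 by (simp add: add_pos_pos)
  then have K: "0 < K" using c0 by (simp add: K_def)
  have "0 < V" using content_ball_pos[of 1 "0 :: real^3"] by (simp add: V_def)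
  then have KV: "0 < K * V" using K by simp
  have "K * V * collision_weight c p \<le> nu c n u T p" if adm: "admissible_state c0 c n u T" for c n u T p
  proof -
    obtain z :: "real^3"
      where z: "\<And>q. q \<in> ball z 1 \<Longrightarrow> norm q \<le> 5 \<and> (1 + norm p) / 4 \<le> \<bar>norm p - norm q\<bar>"
      using unit_ball_separated_from[of p] by blast
    have "indicator (ball z 1) q * (K * collision_weight c p) \<le> 4 * pi * v_phi c p q * maxwellian c n u T q"
      for q
      using nu_integrand_ge[OF c0 adm, of q p] z[of q] nu_integrand_nonneg[OF c0(1) adm, of p q]
      by (cases "q \<in> ball z 1") (auto simp: K_def)
    then have "(\<integral>q. indicator (ball z 1) q * (K * collision_weight c p) \<partial>lborel) \<le> nu c n u T p"
      unfolding nu_def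
      by (intro integral_mono nu_integrand_integrable[OF c0 adm] integrable_mult_left
          integrable_real_indicator) (auto simp: emeasure_lborel_ball_finite[unfolded infinity_ennreal_def])
    moreover have "(\<integral>q. indicator (ball z 1) q * (K * collision_weight c p) \<partial>lborel)
        = K * V * collision_weight c p"
      using content_ball_conv_unit_ball[of 1 z] by (simp add: V_def)
    ultimately show ?thesis by linarith
  qed
  with KV show ?thesis by blast
qed

lemma nu_le_mult_of_pzero_sum_eq:
  assumes c0: "0 < c0" "c0 < 1"
  shows "\<exists>C>0. \<forall>c n u T p q p' q'. admissible_state c0 c n u T
           \<longrightarrow> pzero c p + pzero c q = pzero c p' + pzero c q'
           \<longrightarrow> nu c n u T p \<le> C * nu c n u T p' * nu c n u T q'"
proof -
  obtain B where B: "0 < B"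
    and nu_le: "\<And>c n u T p. admissible_state c0 c n u T \<Longrightarrow> nu c n u T p \<le> B * collision_weight c p"
    using nu_le_weight[OF c0] by blast
  obtain a where a: "0 < a"
    and nu_ge: "\<And>c n u T p. admissible_state c0 c n u T \<Longrightarrow> a * collision_weight c p \<le> nu c n u T p"
    using nu_ge_weight[OF c0] by blast
  define C where "C = 2 * B / a\<^sup>2"
  have "nu c n u T p \<le> C * nu c n u T p' * nu c n u T q'"
    if adm: "admissible_state c0 c n u T" and E: "pzero c p + pzero c q = pzero c p' + pzero c q'"
    for c n u T p q p' q'
  proof -
    have c: "1 \<le> c" using adm by (simp add: admissible_state_def)
    have w: "0 \<le> collision_weight c x" for x using c by (simp add: collision_weight_def)
    have nu: "0 \<le> nu c n u T x" for x
      using mult_nonneg_nonneg[of a "collision_weight c x"] a w[of x] nu_ge[OF adm, of x] by linarith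
    have "nu c n u T p \<le> B * collision_weight c p" by (rule nu_le[OF adm])
    also have "\<dots> \<le> B * (2 * collision_weight c p' * collision_weight c q')"
      using collision_weight_le_of_pzero_sum_eq[OF c E] B by simp
    also have "\<dots> = C * (a * collision_weight c p') * (a * collision_weight c q')"
      using a by (simp add: C_def power2_eq_square)
    also have "\<dots> \<le> C * nu c n u T p' * nu c n u T q'"
      using nu_ge[OF adm, of p'] nu_ge[OF adm, of q'] a B w nu
      by (intro mult_mono) (auto simp: C_def)
    finally show ?thesis .
  qed
  moreover have "0 < C" using a B by (simp add: C_def)
  ultimately show ?thesis by blast
qed

theorem lemma2p5:
  fixes c0 :: real
  assumes "0 < c0" and "c0 < 1"
  shows "\<exists>C>0. \<forall>c n T :: real. \<forall>u :: real^3. \<forall>p q p' q' :: real^3.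
           c \<ge> 1 \<longrightarrow> c0 \<le> n \<longrightarrow> n \<le> 1 / c0 \<longrightarrow> c0 \<le> T \<longrightarrow> T \<le> 1 / c0
           \<longrightarrow> norm u \<le> 1 / c0
           \<longrightarrow> pzero c p + pzero c q = pzero c p' + pzero c q'
           \<longrightarrow> p + q = p' + q'
           \<longrightarrow> nu c n u T p \<le> C * nu c n u T p' * nu c n u T q'
             \<and> nu c n u T q \<le> C * nu c n u T p' * nu c n u T q'"
proof -
  obtain C where "0 < C" and bound: "\<And>c n u T p q p' q'. admissible_state c0 c n u T
      \<Longrightarrow> pzero c p + pzero c q = pzero c p' + pzero c q'
      \<Longrightarrow> nu c n u T p \<le> C * nu c n u T p' * nu c n u T q'"
    using nu_le_mult_of_pzero_sum_eq[OF assms] by blast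
  show ?thesis
  proof (intro exI[of _ C] conjI allI impI \<open>0 < C\<close>)
    fix c n T :: real and u p q p' q' :: "real^3"
    assume "1 \<le> c" "c0 \<le> n" "n \<le> 1 / c0" "c0 \<le> T" "T \<le> 1 / c0" "norm u \<le> 1 / c0"
      and E: "pzero c p + pzero c q = pzero c p' + pzero c q'"
    then have adm: "admissible_state c0 c n u T" by (simp add: admissible_state_def)
    show "nu c n u T p \<le> C * nu c n u T p' * nu c n u T q'"
      using bound[OF adm E] .
    show "nu c n u T q \<le> C * nu c n u T p' * nu c n u T q'"
      using bound[OF adm, of q p] E by (simp add: add.commute)
  qed
qed

end
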